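(* Let $s_p,s_q\in S$ with $s_p$ to the left of $s_q$. Let $W_p$ be the wedge with apex $s_p$ whose axis points downward to the right making angle $\theta_p$ with the horizontal, and $W_q$ the wedge with apex $s_q$ whose axis points downward to the left making angle $\theta_q$ with the horizontal, where $\theta_p-\alpha>0$, $\theta_q-\alpha>0$ and $\theta_p+\theta_q+2\alpha<\pi$, so that $W_p\cap W_q$ is a convex quadrilateral. Each wedge is bounded by an inner ray (angle $\theta-\alpha$ below the horizontal) and an outer ray (angle $\theta+\alpha$ below the horizontal). Let $v_1$ be the intersection of the two inner rays, $v_3$ the intersection of the two outer rays, $v_2$ the intersection of the outer ray of $W_p$ with the inner ray of $W_q$, and $v_4$ the intersection of the inner ray of $W_p$ with the outer ray of $W_q$; set $\mathrm{diag}_1=|v_1v_3|$ and $\mathrm{diag}_2=|v_2v_4|$. If $\theta_p+\theta_q\ge\frac{\pi}{2}+\alpha$, then $\mathrm{diag}_1>\mathrm{diag}_2$.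
   Context: Work in $\mathbb{R}^2$ with coordinates $(x,z)$; the viewing line is $S=\{z=h\}$, $h>0$. Fix $\alpha>0$. A wedge with apex $s$ and axis unit vector $u$ is $W(s,u)=\{s+rv:\ r\ge0,\ |v|=1,\ \angle(v,u)\le\alpha\}$ (opening angle $2\alpha$). *)

theory Defs
  imports "HOL-Analysis.Analysis"
begin

definition ray :: "real \<times> real \<Rightarrow> real \<times> real \<Rightarrow> (real \<times> real) set" where
  "ray s d = {s + r *\<^sub>R d | r. r \<ge> 0}"

definition dir_right :: "real \<Rightarrow> real \<times> real" where
  "dir_right phi = (cos phi, - sin phi)"

definition dir_left :: "real \<Rightarrow> real \<times> real" where
  "dir_left phi = (- cos phi, - sin phi)"

end

theory Submission imports Defs begin

text \<open>
  Both diagonals of the quadrilateral W_p \<inter> W_q join a point on the ray of W_p at angle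
  \<theta>_p - \<alpha> to one on its ray at angle \<theta>_p + \<alpha>, so by the law of cosines each squared
  diagonal is (xq - xp)^2 times the quadratic form x^2 + y^2 - 2 cos(2\<alpha>) x y evaluated at
  the distances from s_p divided by (xq - xp). By the law of sines these distances are
  sin(\<theta>_q \<mp> \<alpha>) / sin(\<theta>_p + \<theta>_q \<mp> 2\<alpha>) for diag_1 and sin(\<theta>_q \<mp> \<alpha>) / sin(\<theta>_p + \<theta>_q) for
  diag_2. Clearing denominators, the difference of the two squared diagonals becomes a
  trigonometric polynomial that splits into terms carrying the factors -sin(2(\<theta>_p + \<theta>_q) \<mp> 2\<alpha>),
  which are non-negative exactly because \<theta>_p + \<theta>_q \<ge> \<pi>/2 + \<alpha>, and
  sin(\<theta>_q + \<alpha>) sin(\<theta>_p + \<theta>_q - 2\<alpha>) - sin(\<theta>_q - \<alpha>) sin(\<theta>_p + \<theta>_q) = sin(\<theta>_p - \<alpha>) sin(2\<alpha>) > 0.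
\<close>

lemma sin_add_mult_sin_diff: "sin (x + y) * sin (x - y) = (sin x)\<^sup>2 - (sin y)\<^sup>2"
  for x y :: real
proof -
  have "sin (x + y) * sin (x - y) = (sin x * cos y)\<^sup>2 - (cos x * sin y)\<^sup>2"
    by (simp add: sin_add sin_diff power2_eq_square algebra_simps)
  also have "\<dots> = (sin x)\<^sup>2 - (sin y)\<^sup>2"
    by (simp add: power_mult_distrib cos_squared_eq algebra_simps)
  finally show ?thesis .
qed

lemma sin_add_mult_sin_add_cross:
  "sin (q + c) * sin (p + q) - sin q * sin (p + q + c) = sin p * sin c"
  for p q c :: real
  apply (simp add: sin_add cos_add)
  using cos_squared_eq[of p] cos_squared_eq[of q] cos_squared_eq[of c] by algebra

lemma sin_sq_add_mult_sin_double_diff: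
  "(sin (x + b))\<^sup>2 * sin (2 * x - b) - 2 * cos b * sin b * sin (x + b) * sin x
     - (sin x)\<^sup>2 * sin (2 * x + b) = - ((sin b)\<^sup>2 * sin (2 * x + b))"
  for x b :: real
  apply (simp add: sin_add sin_diff sin_double cos_double)
  using cos_squared_eq[of x] cos_squared_eq[of b] by algebra

lemma ray_right_inter_ray_left:
  assumes "v \<in> ray (xp, h) (dir_right A) \<inter> ray (xq, h) (dir_left B)"
    and "0 < A + B" "A + B < pi"
  shows "v = (xp, h) + ((xq - xp) * sin B / sin (A + B)) *\<^sub>R dir_right A"
proof -
  obtain r where r: "v = (xp, h) + r *\<^sub>R dir_right A"
    using assms(1) unfolding ray_def by auto
  obtain r' where r': "v = (xq, h) + r' *\<^sub>R dir_left B"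
    using assms(1) unfolding ray_def by auto
  have x: "xp + r * cos A = xq - r' * cos B" and z: "r * sin A = r' * sin B"
    using r r' by (auto simp: dir_right_def dir_left_def)
  have "r * sin (A + B) = (r * sin A) * cos B + (r * cos A) * sin B"
    by (simp add: sin_add algebra_simps)
  also have "\<dots> = (xq - xp) * sin B"
    using x z by algebra
  finally have "r = (xq - xp) * sin B / sin (A + B)"
    using sin_gt_zero[OF assms(2,3)] by (simp add: field_simps)
  with r show ?thesis by simp
qed

definition cosine_form :: "real \<Rightarrow> real \<Rightarrow> real \<Rightarrow> real" where
  "cosine_form c x y = x\<^sup>2 + y\<^sup>2 - 2 * c * x * y"

lemma cosine_form_scale: "cosine_form c (L * x) (L * y) = L\<^sup>2 * cosine_form c x y"
  unfolding cosine_form_def by algebra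

lemma dist_dir_right_sq:
  "(dist (p + r *\<^sub>R dir_right A) (p + t *\<^sub>R dir_right B))\<^sup>2 = cosine_form (cos (A - B)) r t"
  unfolding cosine_form_def dist_norm dir_right_def
  apply (simp add: norm_Pair power2_norm_eq_inner inner_Pair cos_diff power2_eq_square)
  using sin_cos_squared_add3[of A] sin_cos_squared_add3[of B] by algebra

lemma cosine_form_gap_cleared:
  fixes u v Sm Sp S0 c :: real
  assumes "Sm \<noteq> 0" "Sp \<noteq> 0" "S0 \<noteq> 0"
  shows "(Sm * Sp * S0)\<^sup>2 * (cosine_form c (u / Sm) (v / Sp) - cosine_form c (u / S0) (v / S0))
    = u\<^sup>2 * Sp\<^sup>2 * (S0\<^sup>2 - Sm\<^sup>2) + v\<^sup>2 * Sm\<^sup>2 * (S0\<^sup>2 - Sp\<^sup>2)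
      - 2 * c * u * v * Sm * Sp * (S0\<^sup>2 - Sm * Sp)"
  using assms unfolding cosine_form_def by (simp add: field_simps power2_eq_square)

text \<open>
  The hypotheses are the identities satisfied by Sm = sin (s - 2a), Sp = sin (s + 2a),
  S0 = sin s, k = sin 2a, c = cos 2a, F = sin (2s - 2a) and G = sin (2s + 2a).
\<close>
lemma cosine_form_gap_numerator_pos:
  fixes u v Sm Sp S0 k c F G :: real
  assumes pos: "u > 0" "v > 0" "Sm > 0" "Sp > 0" "S0 > 0" "k > 0"
    and F: "F \<le> 0" and G: "G < 0"
    and Sm: "S0\<^sup>2 - Sm\<^sup>2 = k * F" and Sp: "S0\<^sup>2 - Sp\<^sup>2 = - (k * G)"
    and SmSp: "S0\<^sup>2 - Sm * Sp = k\<^sup>2"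
    and FG: "Sp\<^sup>2 * F - 2 * c * k * Sp * S0 - S0\<^sup>2 * G = - (k\<^sup>2 * G)"
    and "v * Sm - u * S0 > 0"
  shows "u\<^sup>2 * Sp\<^sup>2 * (S0\<^sup>2 - Sm\<^sup>2) + v\<^sup>2 * Sm\<^sup>2 * (S0\<^sup>2 - Sp\<^sup>2)
      - 2 * c * u * v * Sm * Sp * (S0\<^sup>2 - Sm * Sp) > 0"
proof -
  define g where "g = u\<^sup>2 * Sp\<^sup>2 * F - v\<^sup>2 * Sm\<^sup>2 * G - 2 * c * k * u * v * Sm * Sp"
  define w where "w = v * Sm - u * S0"
  have "w > 0"
    using \<open>v * Sm - u * S0 > 0\<close> by (simp add: w_def)
  have "S0 * Sm * g = S0 * v * w * (- (Sm\<^sup>2 * G))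
      + Sm\<^sup>2 * u * v * (Sp\<^sup>2 * F - 2 * c * k * Sp * S0 - S0\<^sup>2 * G) - Sp\<^sup>2 * F * u * w * Sm"
    unfolding g_def w_def by (simp add: algebra_simps power2_eq_square)
  also have "\<dots> = S0 * v * w * Sm\<^sup>2 * (- G) + Sm\<^sup>2 * u * v * k\<^sup>2 * (- G) + Sp\<^sup>2 * u * w * Sm * (- F)"
    unfolding FG by (simp add: algebra_simps)
  also have "\<dots> > 0"
    using pos F G \<open>w > 0\<close> by (intro add_pos_nonneg add_pos_pos mult_pos_pos mult_nonneg_nonneg) auto
  finally have "g > 0"
    using pos by (simp add: zero_less_mult_iff mult_less_0_iff)
  have "u\<^sup>2 * Sp\<^sup>2 * (S0\<^sup>2 - Sm\<^sup>2) + v\<^sup>2 * Sm\<^sup>2 * (S0\<^sup>2 - Sp\<^sup>2)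
      - 2 * c * u * v * Sm * Sp * (S0\<^sup>2 - Sm * Sp) = k * g"
    unfolding Sm Sp SmSp g_def by (simp add: algebra_simps power2_eq_square)
  with \<open>g > 0\<close> \<open>k > 0\<close> show ?thesis
    by simp
qed

lemma cosine_form_sin_ratio_lt:
  fixes p q a :: real
  assumes "a > 0" "p > a" "q > a" "p + q + 2 * a < pi" "p + q \<ge> pi / 2 + a"
  shows "cosine_form (cos (2 * a)) (sin (q - a) / sin (p + q)) (sin (q + a) / sin (p + q))
    < cosine_form (cos (2 * a)) (sin (q - a) / sin (p + q - 2 * a)) (sin (q + a) / sin (p + q + 2 * a))"
    (is "?diag2 < ?diag1")
proof -
  define s where "s = p + q"
  define Sm Sp S0 where "Sm = sin (s - 2 * a)" and "Sp = sin (s + 2 * a)" and "S0 = sin s"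
  define F G where "F = sin (2 * s - 2 * a)" and "G = sin (2 * s + 2 * a)"
  have pos: "sin (q - a) > 0" "sin (q + a) > 0" "Sm > 0" "Sp > 0" "S0 > 0" "sin (2 * a) > 0"
    using assms unfolding Sm_def Sp_def S0_def s_def by (auto intro!: sin_gt_zero)
  have "F \<le> 0"
    using assms unfolding F_def s_def by (intro sin_le_zero) auto
  have "sin (2 * s + 2 * a - pi) > 0"
    using assms unfolding s_def by (intro sin_gt_zero) auto
  then have "G < 0"
    by (simp add: G_def sin_diff)
  have "sin (p - a) > 0"
    using assms by (intro sin_gt_zero) auto
  then have "sin (q + a) * Sm - sin (q - a) * S0 > 0"
    using sin_add_mult_sin_add_cross[of "q - a" "2 * a" "p - a"] pos(6)
    by (simp add: Sm_def S0_def s_def algebra_simps)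
  moreover have "S0\<^sup>2 - Sm\<^sup>2 = sin (2 * a) * F"
    using sin_add_mult_sin_diff[of s "s - 2 * a"] by (simp add: Sm_def S0_def F_def mult.commute)
  moreover have "S0\<^sup>2 - Sp\<^sup>2 = - (sin (2 * a) * G)"
    using sin_add_mult_sin_diff[of s "s + 2 * a"] by (simp add: Sp_def S0_def G_def mult.commute)
  moreover have "S0\<^sup>2 - Sm * Sp = (sin (2 * a))\<^sup>2"
    using sin_add_mult_sin_diff[of s "2 * a"] by (simp add: Sm_def Sp_def S0_def algebra_simps)
  moreover have "Sp\<^sup>2 * F - 2 * cos (2 * a) * sin (2 * a) * Sp * S0 - S0\<^sup>2 * G
      = - ((sin (2 * a))\<^sup>2 * G)"
    using sin_sq_add_mult_sin_double_diff[of s "2 * a"] by (simp add: Sp_def S0_def F_def G_def)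
  ultimately have "0 < (sin (q - a))\<^sup>2 * Sp\<^sup>2 * (S0\<^sup>2 - Sm\<^sup>2)
      + (sin (q + a))\<^sup>2 * Sm\<^sup>2 * (S0\<^sup>2 - Sp\<^sup>2)
      - 2 * cos (2 * a) * sin (q - a) * sin (q + a) * Sm * Sp * (S0\<^sup>2 - Sm * Sp)"
    using pos \<open>F \<le> 0\<close> \<open>G < 0\<close> by (intro cosine_form_gap_numerator_pos) auto
  also have "\<dots> = (Sm * Sp * S0)\<^sup>2 * (?diag1 - ?diag2)"
    using cosine_form_gap_cleared[of Sm Sp S0] pos by (simp add: Sm_def Sp_def S0_def s_def)
  finally show ?thesis
    by (simp add: zero_less_mult_iff)
qed

theorem lemma3:
  fixes h \<alpha> xp xq \<theta>p \<theta>q :: real and v1 v2 v3 v4 :: "real \<times> real"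
  assumes "h > 0" and "\<alpha> > 0" and "xp < xq"
    and "\<theta>p - \<alpha> > 0" and "\<theta>q - \<alpha> > 0" and "\<theta>p + \<theta>q + 2 * \<alpha> < pi"
    and "v1 \<in> ray (xp, h) (dir_right (\<theta>p - \<alpha>)) \<inter> ray (xq, h) (dir_left (\<theta>q - \<alpha>))"
    and "v3 \<in> ray (xp, h) (dir_right (\<theta>p + \<alpha>)) \<inter> ray (xq, h) (dir_left (\<theta>q + \<alpha>))"
    and "v2 \<in> ray (xp, h) (dir_right (\<theta>p + \<alpha>)) \<inter> ray (xq, h) (dir_left (\<theta>q - \<alpha>))"
    and "v4 \<in> ray (xp, h) (dir_right (\<theta>p - \<alpha>)) \<inter> ray (xq, h) (dir_left (\<theta>q + \<alpha>))"
    and "\<theta>p + \<theta>q \<ge> pi / 2 + \<alpha>"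
  shows "dist v1 v3 > dist v2 v4"
proof -
  define L where "L = xq - xp"
  have v1: "v1 = (xp, h) + (L * (sin (\<theta>q - \<alpha>) / sin (\<theta>p + \<theta>q - 2 * \<alpha>))) *\<^sub>R dir_right (\<theta>p - \<alpha>)"
    using ray_right_inter_ray_left[OF assms(7)] assms by (simp add: L_def algebra_simps)
  have v3: "v3 = (xp, h) + (L * (sin (\<theta>q + \<alpha>) / sin (\<theta>p + \<theta>q + 2 * \<alpha>))) *\<^sub>R dir_right (\<theta>p + \<alpha>)"
    using ray_right_inter_ray_left[OF assms(8)] assms by (simp add: L_def algebra_simps)
  have v2: "v2 = (xp, h) + (L * (sin (\<theta>q - \<alpha>) / sin (\<theta>p + \<theta>q))) *\<^sub>R dir_right (\<theta>p + \<alpha>)"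
    using ray_right_inter_ray_left[OF assms(9)] assms by (simp add: L_def algebra_simps)
  have v4: "v4 = (xp, h) + (L * (sin (\<theta>q + \<alpha>) / sin (\<theta>p + \<theta>q))) *\<^sub>R dir_right (\<theta>p - \<alpha>)"
    using ray_right_inter_ray_left[OF assms(10)] assms by (simp add: L_def algebra_simps)
  have "cos (\<theta>p - \<alpha> - (\<theta>p + \<alpha>)) = cos (2 * \<alpha>)" "cos (\<theta>p + \<alpha> - (\<theta>p - \<alpha>)) = cos (2 * \<alpha>)"
    using cos_minus[of "2 * \<alpha>"] by simp_all
  moreover have "L\<^sup>2 > 0"
    using assms(3) by (simp add: L_def)
  ultimately have "(dist v2 v4)\<^sup>2 < (dist v1 v3)\<^sup>2"
    using cosine_form_sin_ratio_lt[of \<alpha> \<theta>p \<theta>q] assms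
    unfolding v1 v2 v3 v4 dist_dir_right_sq cosine_form_scale by simp
  then show ?thesis
    by (rule power_less_imp_less_base) simp
qed

end
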